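(* (a) For every proposition $p$ of QHC: if $p$ is stable then the problem $!p$ is stable, and if $p$ is decidable then the problem $!p$ is decidable. Conversely, if $p$ is of the form $?\alpha$ for a problem $\alpha$, then stability (resp. decidability) of the problem $!p$ implies stability (resp. decidability) of $p$. (b) For every problem $\alpha$ of QHC: if $\alpha$ is stable then the proposition $?\alpha$ is stable, and if $\alpha$ is decidable then $?\alpha$ is decidable. Conversely, if $\alpha$ is of the form $!p$ for a proposition $p$, then stability (resp. decidability) of $?\alpha$ implies stability (resp. decidability) of $\alpha$.
   Context: QHC is a two-sorted first-order calculus. Its only terms are individual variables. Every formula is either a problem (denoted by Greek letters $\alpha,\beta,\gamma,\dots$) or a proposition (denoted by Latin letters $p,q,\dots$). Atomic formulas are proposition variables $p(t_1,\dots,t_n)$ (of proposition type), problem variables $\pi(t_1,\dots,t_n)$ (of problem type), and the constants $0$ (a proposition, classical falsity) and $\bot$ (a problem, intuitionistic absurdity). Propositions are closed under the classical connectives $\land,\lor,\to$ and quantifiers $\exists,\forall$; problems are closed under the intuitionistic connectives $\land,\lor,\to$ and quantifiers $\exists,\forall$ (the same symbols are used, distinguished by the type of the arguments). $\neg p$ abbreviates $p\to 0$, $\neg\alpha$ abbreviates $\alpha\to\bot$, and $\leftrightarrow$ is defined as usual. There are two type-conversion operators: if $p$ is a proposition then $!p$ is a problem, and if $\alpha$ is a problem then $?\alpha$ is a proposition. Deductive system of QHC: all axioms and rules of classical predicate logic applied to all propositions; all postulates and rules of intuitionistic predicate logic applied to all problems; the rules $p\,/\,!p$ and $\alpha\,/\,?\alpha$;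 and the schemas $?!p\to p$; $\alpha\to\, !?\alpha$; $!(p\to q)\to(!p\to !q)$; $?(\alpha\to\beta)\to(?\alpha\to ?\beta)$; $!0\to\bot$; $?(\alpha\land\beta)\leftrightarrow ?\alpha\land ?\beta$; $?(\alpha\lor\beta)\leftrightarrow ?\alpha\lor ?\beta$; $?\bot\to 0$; $?\exists x\,\alpha(x)\leftrightarrow\exists x\,?\alpha(x)$; $?\forall x\,\alpha(x)\to\forall x\,?\alpha(x)$ (usual variable side conditions implicit). $\vdash A$ means $A$ is derivable in QHC; $A\Rightarrow B$ means $\vdash A\to B$ and $A\Leftrightarrow B$ means $\vdash A\leftrightarrow B$ (with $A,B$ of the same type); $A\vdash B$ means $B$ is derivable in QHC from the premise $A$. Notation: $\Box p := ?!p$ (a proposition) and $\nabla\alpha := !?\alpha$ (a problem). QC and QH denote classical and intuitionistic predicate calculus. A problem $\alpha$ is decidable if $\vdash\alpha\lor\neg\alpha$, and stable if $\neg\neg\alpha\Rightarrow\alpha$. A proposition $p$ is decidable if $\vdash\, !p\lor !\neg p$, and stable if $\neg !\neg p\Rightarrow\, !p$. *)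

theory Defs
  imports Main
begin

text \<open>Quest a is the conversion of a
problem to a proposition, Bang p the conversion of a proposition to a problem.\<close>

type_synonym ivar = nat

datatype qprop =
    PAtom nat "ivar list"
  | PZero
  | PAnd qprop qprop
  | POr qprop qprop
  | PImp qprop qprop
  | PEx ivar qprop
  | PAll ivar qprop
  | Quest qprob
and qprob =
    QAtom nat "ivar list"
  | QBot
  | QAnd qprob qprob
  | QOr qprob qprob
  | QImp qprob qprob
  | QEx ivar qprob
  | QAll ivar qprob
  | Bang qprop

definition PNot :: "qprop \<Rightarrow> qprop" where "PNot p = PImp p PZero"
definition QNot :: "qprob \<Rightarrow> qprob" where "QNot a = QImp a QBot"
definition PIff :: "qprop \<Rightarrow> qprop \<Rightarrow> qprop" where
  "PIff p q = PAnd (PImp p q) (PImp q p)"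
definition QIff :: "qprob \<Rightarrow> qprob \<Rightarrow> qprob" where
  "QIff a b = QAnd (QImp a b) (QImp b a)"

primrec fvP :: "qprop \<Rightarrow> ivar set" and fvQ :: "qprob \<Rightarrow> ivar set" where
  "fvP (PAtom n xs) = set xs"
| "fvP PZero = {}"
| "fvP (PAnd p q) = fvP p \<union> fvP q"
| "fvP (POr p q) = fvP p \<union> fvP q"
| "fvP (PImp p q) = fvP p \<union> fvP q"
| "fvP (PEx x p) = fvP p - {x}"
| "fvP (PAll x p) = fvP p - {x}"
| "fvP (Quest a) = fvQ a"
| "fvQ (QAtom n xs) = set xs"
| "fvQ QBot = {}"
| "fvQ (QAnd a b) = fvQ a \<union> fvQ b"
| "fvQ (QOr a b) = fvQ a \<union> fvQ b"
| "fvQ (QImp a b) = fvQ a \<union> fvQ b"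
| "fvQ (QEx x a) = fvQ a - {x}"
| "fvQ (QAll x a) = fvQ a - {x}"
| "fvQ (Bang p) = fvP p"

text \<open>substP y x A: replace the free occurrences of x in A by y (no renaming;
used only under the side condition that y is free for x).\<close>

primrec substP :: "ivar \<Rightarrow> ivar \<Rightarrow> qprop \<Rightarrow> qprop"
  and substQ :: "ivar \<Rightarrow> ivar \<Rightarrow> qprob \<Rightarrow> qprob" where
  "substP y x (PAtom n zs) = PAtom n (map (\<lambda>z. if z = x then y else z) zs)"
| "substP y x PZero = PZero"
| "substP y x (PAnd p q) = PAnd (substP y x p) (substP y x q)"
| "substP y x (POr p q) = POr (substP y x p) (substP y x q)"
| "substP y x (PImp p q) = PImp (substP y x p) (substP y x q)"
| "substP y x (PEx z p) = (if z = x then PEx z p else PEx z (substP y x p))"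
| "substP y x (PAll z p) = (if z = x then PAll z p else PAll z (substP y x p))"
| "substP y x (Quest a) = Quest (substQ y x a)"
| "substQ y x (QAtom n zs) = QAtom n (map (\<lambda>z. if z = x then y else z) zs)"
| "substQ y x QBot = QBot"
| "substQ y x (QAnd a b) = QAnd (substQ y x a) (substQ y x b)"
| "substQ y x (QOr a b) = QOr (substQ y x a) (substQ y x b)"
| "substQ y x (QImp a b) = QImp (substQ y x a) (substQ y x b)"
| "substQ y x (QEx z a) = (if z = x then QEx z a else QEx z (substQ y x a))"
| "substQ y x (QAll z a) = (if z = x then QAll z a else QAll z (substQ y x a))"
| "substQ y x (Bang p) = Bang (substP y x p)"

primrec freeforP :: "ivar \<Rightarrow> ivar \<Rightarrow> qprop \<Rightarrow> bool"
  and freeforQ :: "ivar \<Rightarrow> ivar \<Rightarrow> qprob \<Rightarrow> bool" where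
  "freeforP y x (PAtom n zs) = True"
| "freeforP y x PZero = True"
| "freeforP y x (PAnd p q) = (freeforP y x p \<and> freeforP y x q)"
| "freeforP y x (POr p q) = (freeforP y x p \<and> freeforP y x q)"
| "freeforP y x (PImp p q) = (freeforP y x p \<and> freeforP y x q)"
| "freeforP y x (PEx z p) = (z = x \<or> x \<notin> fvP p \<or> (z \<noteq> y \<and> freeforP y x p))"
| "freeforP y x (PAll z p) = (z = x \<or> x \<notin> fvP p \<or> (z \<noteq> y \<and> freeforP y x p))"
| "freeforP y x (Quest a) = freeforQ y x a"
| "freeforQ y x (QAtom n zs) = True"
| "freeforQ y x QBot = True"
| "freeforQ y x (QAnd a b) = (freeforQ y x a \<and> freeforQ y x b)"
| "freeforQ y x (QOr a b) = (freeforQ y x a \<and> freeforQ y x b)"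
| "freeforQ y x (QImp a b) = (freeforQ y x a \<and> freeforQ y x b)"
| "freeforQ y x (QEx z a) = (z = x \<or> x \<notin> fvQ a \<or> (z \<noteq> y \<and> freeforQ y x a))"
| "freeforQ y x (QAll z a) = (z = x \<or> x \<notin> fvQ a \<or> (z \<noteq> y \<and> freeforQ y x a))"
| "freeforQ y x (Bang p) = freeforP y x p"

text \<open>Classical predicate logic (Hilbert style) on propositions, intuitionistic
predicate logic on problems, plus the QHC-specific rules and schemas.\<close>

inductive thmP :: "qprop \<Rightarrow> bool" and thmQ :: "qprob \<Rightarrow> bool" where
  P_K: "thmP (PImp A (PImp B A))"
| P_S: "thmP (PImp (PImp A B) (PImp (PImp A (PImp B C)) (PImp A C)))"
| P_AndE1: "thmP (PImp (PAnd A B) A)"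
| P_AndE2: "thmP (PImp (PAnd A B) B)"
| P_AndI: "thmP (PImp A (PImp B (PAnd A B)))"
| P_OrI1: "thmP (PImp A (POr A B))"
| P_OrI2: "thmP (PImp B (POr A B))"
| P_OrE: "thmP (PImp (PImp A C) (PImp (PImp B C) (PImp (POr A B) C)))"
| P_Efq: "thmP (PImp PZero A)"
| P_DNE: "thmP (PImp (PImp (PImp A PZero) PZero) A)"
| P_AllE: "freeforP y x A \<Longrightarrow> thmP (PImp (PAll x A) (substP y x A))"
| P_ExI: "freeforP y x A \<Longrightarrow> thmP (PImp (substP y x A) (PEx x A))"
| P_MP: "thmP (PImp A B) \<Longrightarrow> thmP A \<Longrightarrow> thmP B"
| P_AllI: "thmP (PImp C A) \<Longrightarrow> x \<notin> fvP C \<Longrightarrow> thmP (PImp C (PAll x A))"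
| P_ExE: "thmP (PImp A C) \<Longrightarrow> x \<notin> fvP C \<Longrightarrow> thmP (PImp (PEx x A) C)"
| Q_K: "thmQ (QImp a (QImp b a))"
| Q_S: "thmQ (QImp (QImp a b) (QImp (QImp a (QImp b c)) (QImp a c)))"
| Q_AndE1: "thmQ (QImp (QAnd a b) a)"
| Q_AndE2: "thmQ (QImp (QAnd a b) b)"
| Q_AndI: "thmQ (QImp a (QImp b (QAnd a b)))"
| Q_OrI1: "thmQ (QImp a (QOr a b))"
| Q_OrI2: "thmQ (QImp b (QOr a b))"
| Q_OrE: "thmQ (QImp (QImp a c) (QImp (QImp b c) (QImp (QOr a b) c)))"
| Q_Efq: "thmQ (QImp QBot a)"
| Q_AllE: "freeforQ y x a \<Longrightarrow> thmQ (QImp (QAll x a) (substQ y x a))"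
| Q_ExI: "freeforQ y x a \<Longrightarrow> thmQ (QImp (substQ y x a) (QEx x a))"
| Q_MP: "thmQ (QImp a b) \<Longrightarrow> thmQ a \<Longrightarrow> thmQ b"
| Q_AllI: "thmQ (QImp c a) \<Longrightarrow> x \<notin> fvQ c \<Longrightarrow> thmQ (QImp c (QAll x a))"
| Q_ExE: "thmQ (QImp a c) \<Longrightarrow> x \<notin> fvQ c \<Longrightarrow> thmQ (QImp (QEx x a) c)"
| R_Bang: "thmP p \<Longrightarrow> thmQ (Bang p)"
| R_Quest: "thmQ a \<Longrightarrow> thmP (Quest a)"
| A1: "thmP (PImp (Quest (Bang p)) p)"
| A2: "thmQ (QImp a (Bang (Quest a)))"
| A3: "thmQ (QImp (Bang (PImp p q)) (QImp (Bang p) (Bang q)))"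
| A4: "thmP (PImp (Quest (QImp a b)) (PImp (Quest a) (Quest b)))"
| A5: "thmQ (QImp (Bang PZero) QBot)"
| A6: "thmP (PIff (Quest (QAnd a b)) (PAnd (Quest a) (Quest b)))"
| A7: "thmP (PIff (Quest (QOr a b)) (POr (Quest a) (Quest b)))"
| A8: "thmP (PImp (Quest QBot) PZero)"
| A9: "thmP (PIff (Quest (QEx x a)) (PEx x (Quest a)))"
| A10: "thmP (PImp (Quest (QAll x a)) (PAll x (Quest a)))"

definition stableQ :: "qprob \<Rightarrow> bool" where
  "stableQ a \<longleftrightarrow> thmQ (QImp (QNot (QNot a)) a)"
definition decidableQ :: "qprob \<Rightarrow> bool" where
  "decidableQ a \<longleftrightarrow> thmQ (QOr a (QNot a))"
definition stableP :: "qprop \<Rightarrow> bool" where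
  "stableP p \<longleftrightarrow> thmQ (QImp (QNot (Bang (PNot p))) (Bang p))"
definition decidableP :: "qprop \<Rightarrow> bool" where
  "decidableP p \<longleftrightarrow> thmQ (QOr (Bang p) (Bang (PNot p)))"

end

theory Submission
  imports Defs
begin

text \<open>Everything reduces to three QHC facts: \<open>!\<not>p \<Rightarrow> \<not>!p\<close>, \<open>\<not>\<alpha> \<Rightarrow> !\<not>?\<alpha>\<close>
and \<open>!?!p \<Rightarrow> !p\<close>. Stability and decidability of a problem or proposition both have
the shape \<open>\<not>x \<Rightarrow> y\<close> resp. \<open>\<vdash> y \<or> x\<close> (with \<open>x = \<not>\<alpha>, y = \<alpha>\<close> for problems and
\<open>x = !\<not>p, y = !p\<close> for propositions); such statements transfer along \<open>x' \<Rightarrow> x\<close> and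
\<open>y \<Rightarrow> y'\<close>, and the required implications are composed from the three facts and the
schemas \<open>\<alpha> \<Rightarrow> !?\<alpha>\<close>, \<open>?!p \<Rightarrow> p\<close>.\<close>

lemma thmQ_imp_elim_premise:
  "thmQ t \<Longrightarrow> thmQ (QImp a (QImp t b)) \<Longrightarrow> thmQ (QImp a b)"
  using Q_MP[OF Q_MP[OF Q_S Q_MP[OF Q_K]]] by blast

lemma thmQ_imp_trans: "thmQ (QImp a b) \<Longrightarrow> thmQ (QImp b c) \<Longrightarrow> thmQ (QImp a c)"
  using Q_MP[OF Q_MP[OF Q_S] Q_MP[OF Q_K]] by blast

lemma thmQ_imp_refl: "thmQ (QImp a a)"
  using Q_MP[OF Q_MP[OF Q_S Q_K] Q_K[of a "QImp a a"]] .

lemma thmQ_imp_prefix: "thmQ (QImp b c) \<Longrightarrow> thmQ (QImp (QImp a b) (QImp a c))"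
  using thmQ_imp_elim_premise[OF Q_MP[OF Q_K] Q_S] .

lemma thmQ_imp_swap: "thmQ (QImp a (QImp b c)) \<Longrightarrow> thmQ (QImp b (QImp a c))"
  using thmQ_imp_trans[OF Q_K thmQ_imp_elim_premise[OF _ Q_S]] .

lemma thmQ_contrapos: "thmQ (QImp a b) \<Longrightarrow> thmQ (QImp (QNot b) (QNot a))"
  unfolding QNot_def
  using thmQ_imp_swap[OF thmQ_imp_trans[OF _ thmQ_imp_swap[OF thmQ_imp_refl]]] .

lemma thmQ_or_mono:
  "thmQ (QOr a b) \<Longrightarrow> thmQ (QImp a c) \<Longrightarrow> thmQ (QImp b d) \<Longrightarrow> thmQ (QOr c d)"
  using Q_MP[OF Q_MP[OF Q_MP[OF Q_OrE thmQ_imp_trans[OF _ Q_OrI1]] thmQ_imp_trans[OF _ Q_OrI2]]]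
  by blast

lemma thmP_imp_trans: "thmP (PImp a b) \<Longrightarrow> thmP (PImp b c) \<Longrightarrow> thmP (PImp a c)"
  using P_MP[OF P_MP[OF P_S] P_MP[OF P_K]] by blast

lemma thmP_imp_prefix: "thmP (PImp b c) \<Longrightarrow> thmP (PImp (PImp a b) (PImp a c))"
  using P_MP[OF P_MP[OF P_S P_MP[OF P_K P_MP[OF P_K]]] P_S] by blast

lemma thmQ_Bang_mono: "thmP (PImp p q) \<Longrightarrow> thmQ (QImp (Bang p) (Bang q))"
  using Q_MP[OF A3 R_Bang] .

lemma thmQ_Bang_PNot_imp_QNot_Bang: "thmQ (QImp (Bang (PNot p)) (QNot (Bang p)))"
  unfolding PNot_def QNot_def using thmQ_imp_trans[OF A3 thmQ_imp_prefix[OF A5]] .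

lemma thmQ_QNot_imp_Bang_PNot_Quest: "thmQ (QImp (QNot a) (Bang (PNot (Quest a))))"
proof -
  have "thmP (PImp (Quest (QNot a)) (PNot (Quest a)))"
    unfolding QNot_def PNot_def using thmP_imp_trans[OF A4 thmP_imp_prefix[OF A8]] .
  then show ?thesis using thmQ_imp_trans[OF A2 thmQ_Bang_mono] by blast
qed

lemma thmQ_Bang_Quest_Bang_imp_Bang: "thmQ (QImp (Bang (Quest (Bang p))) (Bang p))"
  using thmQ_Bang_mono[OF A1] .

lemma thmQ_QNot_Bang_Quest_imp_Bang_PNot_Quest:
  "thmQ (QImp (QNot (Bang (Quest a))) (Bang (PNot (Quest a))))"
  using thmQ_imp_trans[OF thmQ_contrapos[OF A2] thmQ_QNot_imp_Bang_PNot_Quest] .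

lemma thmQ_Bang_PNot_Quest_Bang_imp_QNot_Bang:
  "thmQ (QImp (Bang (PNot (Quest (Bang p)))) (QNot (Bang p)))"
  using thmQ_imp_trans[OF thmQ_Bang_PNot_imp_QNot_Bang thmQ_contrapos[OF A2]] .

lemma thmQ_stable_shape_transfer:
  "thmQ (QImp (QNot x') y) \<Longrightarrow> thmQ (QImp x' x) \<Longrightarrow> thmQ (QImp y y')
    \<Longrightarrow> thmQ (QImp (QNot x) y')"
  using thmQ_imp_trans[OF thmQ_imp_trans[OF thmQ_contrapos]] by blast

lemma stableQ_Bang_if_stableP: "stableP p \<Longrightarrow> stableQ (Bang p)"
  unfolding stableP_def stableQ_def
  using thmQ_stable_shape_transfer[OF _ thmQ_Bang_PNot_imp_QNot_Bang thmQ_imp_refl] .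

lemma decidableQ_Bang_if_decidableP: "decidableP p \<Longrightarrow> decidableQ (Bang p)"
  unfolding decidableP_def decidableQ_def
  using thmQ_or_mono[OF _ thmQ_imp_refl thmQ_Bang_PNot_imp_QNot_Bang] .

lemma stableP_Quest_if_stableQ_Bang_Quest: "stableQ (Bang (Quest a)) \<Longrightarrow> stableP (Quest a)"
  unfolding stableP_def stableQ_def
  using thmQ_stable_shape_transfer[OF _ thmQ_QNot_Bang_Quest_imp_Bang_PNot_Quest thmQ_imp_refl] .

lemma decidableP_Quest_if_decidableQ_Bang_Quest:
  "decidableQ (Bang (Quest a)) \<Longrightarrow> decidableP (Quest a)"
  unfolding decidableP_def decidableQ_def
  using thmQ_or_mono[OF _ thmQ_imp_refl thmQ_QNot_Bang_Quest_imp_Bang_PNot_Quest] .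

lemma stableP_Quest_if_stableQ: "stableQ a \<Longrightarrow> stableP (Quest a)"
  unfolding stableP_def stableQ_def
  using thmQ_stable_shape_transfer[OF _ thmQ_QNot_imp_Bang_PNot_Quest A2] .

lemma decidableP_Quest_if_decidableQ: "decidableQ a \<Longrightarrow> decidableP (Quest a)"
  unfolding decidableP_def decidableQ_def
  using thmQ_or_mono[OF _ A2 thmQ_QNot_imp_Bang_PNot_Quest] .

lemma stableQ_Bang_if_stableP_Quest_Bang: "stableP (Quest (Bang p)) \<Longrightarrow> stableQ (Bang p)"
  unfolding stableP_def stableQ_def
  using thmQ_stable_shape_transfer[OF _ thmQ_Bang_PNot_Quest_Bang_imp_QNot_Bang
      thmQ_Bang_Quest_Bang_imp_Bang] .

lemma decidableQ_Bang_if_decidableP_Quest_Bang: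
  "decidableP (Quest (Bang p)) \<Longrightarrow> decidableQ (Bang p)"
  unfolding decidableP_def decidableQ_def
  using thmQ_or_mono[OF _ thmQ_Bang_Quest_Bang_imp_Bang
      thmQ_Bang_PNot_Quest_Bang_imp_QNot_Bang] .

theorem proposition2p19:
  shows "(\<forall>p. (stableP p \<longrightarrow> stableQ (Bang p)) \<and> (decidableP p \<longrightarrow> decidableQ (Bang p)))
       \<and> (\<forall>a. (stableQ (Bang (Quest a)) \<longrightarrow> stableP (Quest a))
             \<and> (decidableQ (Bang (Quest a)) \<longrightarrow> decidableP (Quest a)))
       \<and> (\<forall>a. (stableQ a \<longrightarrow> stableP (Quest a)) \<and> (decidableQ a \<longrightarrow> decidableP (Quest a)))
       \<and> (\<forall>p. (stableP (Quest (Bang p)) \<longrightarrow> stableQ (Bang p))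
             \<and> (decidableP (Quest (Bang p)) \<longrightarrow> decidableQ (Bang p)))"
  using stableQ_Bang_if_stableP decidableQ_Bang_if_decidableP
    stableP_Quest_if_stableQ_Bang_Quest decidableP_Quest_if_decidableQ_Bang_Quest
    stableP_Quest_if_stableQ decidableP_Quest_if_decidableQ
    stableQ_Bang_if_stableP_Quest_Bang decidableQ_Bang_if_decidableP_Quest_Bang
  by blast

end
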